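(* In the binary sequential learning model described in the context, with information cascade threshold $k$, let $\tilde u(\varepsilon)=u(\varepsilon)(1-p)+p(1-u(\varepsilon))$ and $\rho(\varepsilon)=\frac{1-\tilde u(\varepsilon)}{\tilde u(\varepsilon)}$. If $\tilde u(\varepsilon)\neq\frac12$, the probability of a correct cascade is $$\mathbb{P}(\text{correct cascade})=\frac{\rho(\varepsilon)^k-1}{\rho(\varepsilon)^{2k}-1}.$$ If $\tilde u(\varepsilon)=\frac12$, an information cascade does not occur.
   Context: Binary model: unknown state $\theta\in\{-1,+1\}$ with uniform prior; agents $n=1,2,\dots$ act in sequence; agent $n$ privately observes $s_n\in\{-1,+1\}$, i.i.d. given $\theta$ with $\mathbb{P}(s_n=\theta\mid\theta)=p\in(1/2,1)$. Before a cascade, agent $n$'s intended action equals her signal and she publicly reports $x_n=a_n$ with probability $1-u(\varepsilon)$ and $x_n=-a_n$ with probability $u(\varepsilon)=\frac{1}{1+e^{\varepsilon}}$, where $\varepsilon>0$ is the privacy budget. The information cascade threshold is $k=\lfloor\log_{\rho(\varepsilon)}\frac{1-p}{p}\rfloor+1$. An information cascade starts at the first agent whose history has (number of $+1$ reports) $-$ (number of $-1$ reports) equal to $\pm k$; from then on all agents take and truthfully report the action favored by the history. It is a correct cascade if that action equals $\theta$. *)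

theory Defs
  imports "HOL-Probability.Probability"
begin

definition u_priv :: "real \<Rightarrow> real" where
  "u_priv \<epsilon> = 1 / (1 + exp \<epsilon>)"

text \<open>Probability that a pre-cascade report equals the true state.\<close>
definition u_tilde :: "real \<Rightarrow> real \<Rightarrow> real" where
  "u_tilde p \<epsilon> = u_priv \<epsilon> * (1 - p) + p * (1 - u_priv \<epsilon>)"

definition rho :: "real \<Rightarrow> real \<Rightarrow> real" where
  "rho p \<epsilon> = (1 - u_tilde p \<epsilon>) / u_tilde p \<epsilon>"

definition threshold :: "real \<Rightarrow> real \<Rightarrow> nat" where
  "threshold p \<epsilon> = nat (\<lfloor>log (rho p \<epsilon>) ((1 - p) / p)\<rfloor> + 1)"

text \<open>Joint law of the state theta (uniform on {-1,1}) and, for each agent n,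
  a pair (c_n, f_n): c_n = True iff the private signal equals theta (prob p),
  f_n = True iff the privacy mechanism flips the report (prob u(eps)).\<close>
definition model :: "real \<Rightarrow> real \<Rightarrow> (int \<times> (bool \<times> bool) stream) measure" where
  "model p \<epsilon> = measure_pmf (pmf_of_set {-1::int, 1}) \<Otimes>\<^sub>M
     stream_space (measure_pmf (pair_pmf (bernoulli_pmf p) (bernoulli_pmf (u_priv \<epsilon>))))"

definition signal :: "int \<Rightarrow> (bool \<times> bool) stream \<Rightarrow> nat \<Rightarrow> int" where
  "signal \<theta> \<omega> n = (if fst (\<omega> !! n) then \<theta> else - \<theta>)"

text \<open>Public report before a cascade: intended action = signal, flipped w.p. u.\<close>
definition report :: "int \<Rightarrow> (bool \<times> bool) stream \<Rightarrow> nat \<Rightarrow> int" where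
  "report \<theta> \<omega> n = (if snd (\<omega> !! n) then - signal \<theta> \<omega> n else signal \<theta> \<omega> n)"

text \<open>(#(+1) reports) - (#(-1) reports) in the history of the agent with
  0-based index n, i.e. over the reports of agents 0..n-1 (all pre-cascade
  as long as no earlier history reached +-k).\<close>
definition hist_diff :: "int \<Rightarrow> (bool \<times> bool) stream \<Rightarrow> nat \<Rightarrow> int" where
  "hist_diff \<theta> \<omega> n = (\<Sum>i<n. report \<theta> \<omega> i)"

definition cascade_starts :: "nat \<Rightarrow> int \<Rightarrow> (bool \<times> bool) stream \<Rightarrow> nat \<Rightarrow> bool" where
  "cascade_starts k \<theta> \<omega> n \<longleftrightarrow>
     \<bar>hist_diff \<theta> \<omega> n\<bar> = int k \<and> (\<forall>m<n. \<bar>hist_diff \<theta> \<omega> m\<bar> \<noteq> int k)"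

definition cascade_occurs :: "nat \<Rightarrow> int \<times> (bool \<times> bool) stream \<Rightarrow> bool" where
  "cascade_occurs k x \<longleftrightarrow> (\<exists>n. cascade_starts k (fst x) (snd x) n)"

definition correct_cascade :: "nat \<Rightarrow> int \<times> (bool \<times> bool) stream \<Rightarrow> bool" where
  "correct_cascade k x \<longleftrightarrow>
     (\<exists>n. cascade_starts k (fst x) (snd x) n \<and> hist_diff (fst x) (snd x) n = int k * fst x)"

end

theory Submission
  imports Defs
begin

(* Multiplying the public history by the state \<theta> turns it into a simple random walk whose
   steps are +1 exactly when a report agrees with \<theta>, which happens independently with
   probability u_tilde. A correct cascade is the event that this walk, started at 0, hits +k
   before -k. Conditioning on the first step, the probability h j of this event from j
   satisfies h j = u_tilde h (j + 1) + (1 - u_tilde) h (j - 1) with h (-k) = 0 and h k = 1,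
   whose increments are geometric with ratio rho (gambler's ruin). For p > 1/2 and \<epsilon> > 0
   one always has u_tilde > 1/2, so the alternative u_tilde = 1/2 never arises. *)

(* \<theta> times the report of an agent whose sample is (signal correct, report flipped). *)
definition walk_step :: "bool \<times> bool \<Rightarrow> int" where
  "walk_step y = (if fst y \<noteq> snd y then 1 else -1)"

definition walk :: "(bool \<times> bool) stream \<Rightarrow> nat \<Rightarrow> int" where
  "walk \<omega> n = (\<Sum>i<n. walk_step (\<omega> !! i))"

lemma hist_diff_eq_walk: "hist_diff \<theta> \<omega> n = \<theta> * walk \<omega> n"
  unfolding hist_diff_def walk_def report_def signal_def walk_step_def
  by (auto simp: sum_distrib_left intro!: sum.cong)

lemma walk_0 [simp]: "walk \<omega> 0 = 0"
  by (simp add: walk_def)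

lemma walk_Stream_Suc [simp]: "walk (x ## \<omega>) (Suc n) = walk_step x + walk \<omega> n"
  unfolding walk_def sum.lessThan_Suc_shift by simp

lemma measurable_walk [measurable]:
  "(\<lambda>\<omega>. walk \<omega> n) \<in> stream_space (measure_pmf D) \<rightarrow>\<^sub>M count_space UNIV"
proof -
  have sets: "sets (stream_space (measure_pmf D)) = sets (stream_space (count_space UNIV))"
    by (rule sets_stream_space_cong) simp
  have "(\<lambda>\<omega>. walk \<omega> n) = (\<lambda>xs. \<Sum>i<n. walk_step (xs ! i)) \<circ> stake n"
    by (simp add: walk_def fun_eq_iff)
  then show ?thesis
    unfolding measurable_cong_sets[OF sets refl] by simp
qed

lemma pred_walk [measurable]:
  "Measurable.pred (stream_space (measure_pmf D)) (\<lambda>\<omega>. Q (walk \<omega> n))"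
  using measurable_compose[OF measurable_walk measurable_count_space] by (simp add: comp_def)

definition hits_top_first :: "int \<Rightarrow> int \<Rightarrow> (bool \<times> bool) stream \<Rightarrow> bool" where
  "hits_top_first K j \<omega> \<longleftrightarrow> (\<exists>n. j + walk \<omega> n = K \<and> (\<forall>m<n. \<bar>j + walk \<omega> m\<bar> \<noteq> K))"

lemma pred_hits_top_first [measurable]:
  "Measurable.pred (stream_space (measure_pmf D)) (hits_top_first K j)"
  unfolding hits_top_first_def by measurable

lemma hits_top_first_top: "0 \<le> K \<Longrightarrow> hits_top_first K K \<omega>"
  unfolding hits_top_first_def by (rule exI[of _ 0]) simp

lemma not_hits_top_first_bottom: "0 < K \<Longrightarrow> \<not> hits_top_first K (- K) \<omega>"
  unfolding hits_top_first_def
proof clarify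
  fix n assume "0 < K" "- K + walk \<omega> n = K" "\<forall>m<n. \<bar>- K + walk \<omega> m\<bar> \<noteq> K"
  then show False by (cases "n = 0") auto
qed

lemma hits_top_first_Stream:
  assumes "\<bar>j\<bar> < K"
  shows "hits_top_first K j (x ## \<omega>) \<longleftrightarrow> hits_top_first K (j + walk_step x) \<omega>"
proof -
  have ex_Suc: "(\<exists>n. P n) \<longleftrightarrow> (\<exists>n. P (Suc n))" if "\<not> P 0" for P :: "nat \<Rightarrow> bool"
    using that by (metis not0_implies_Suc)
  have "hits_top_first K j (x ## \<omega>) \<longleftrightarrow>
      (\<exists>n. j + walk (x ## \<omega>) (Suc n) = K \<and> (\<forall>m<Suc n. \<bar>j + walk (x ## \<omega>) m\<bar> \<noteq> K))"
    unfolding hits_top_first_def using assms by (intro ex_Suc) simp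
  then show ?thesis
    unfolding hits_top_first_def All_less_Suc2 using assms by (simp add: add.assoc)
qed

lemma pred_correct_cascade [measurable]:
  "Measurable.pred (measure_pmf M \<Otimes>\<^sub>M stream_space (measure_pmf D)) (correct_cascade k)"
proof -
  have sets: "sets (measure_pmf M \<Otimes>\<^sub>M stream_space (measure_pmf D)) =
      sets (count_space UNIV \<Otimes>\<^sub>M stream_space (measure_pmf D))"
    by (rule sets_pair_measure_cong) simp_all
  show ?thesis
    unfolding measurable_cong_sets[OF sets refl]
  proof (rule measurable_pair_measure_countable1)
    fix \<theta> :: int
    show "Measurable.pred (stream_space (measure_pmf D)) (\<lambda>\<omega>. correct_cascade k (\<theta>, \<omega>))"
      unfolding correct_cascade_def cascade_starts_def hist_diff_eq_walk fst_conv snd_conv by measurable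
  qed simp
qed

lemma correct_cascade_iff_hits_top_first:
  assumes "\<theta> \<in> {-1, 1}"
  shows "correct_cascade k (\<theta>, \<omega>) \<longleftrightarrow> hits_top_first (int k) 0 \<omega>"
proof -
  have abs_eq: "\<bar>\<theta> * w\<bar> = \<bar>w\<bar>" for w
    using assms by auto
  have reached_eq: "((\<bar>w\<bar> = int k \<and> Q) \<and> \<theta> * w = int k * \<theta>) \<longleftrightarrow> (w = int k \<and> Q)" for w Q
    using assms by auto
  have "correct_cascade k (\<theta>, \<omega>) \<longleftrightarrow>
      (\<exists>n. (\<bar>walk \<omega> n\<bar> = int k \<and> (\<forall>m<n. \<bar>walk \<omega> m\<bar> \<noteq> int k)) \<and>
        \<theta> * walk \<omega> n = int k * \<theta>)"
    unfolding correct_cascade_def cascade_starts_def hist_diff_eq_walk fst_conv snd_conv abs_eq ..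
  also have "\<dots> \<longleftrightarrow> hits_top_first (int k) 0 \<omega>"
    unfolding hits_top_first_def reached_eq by simp
  finally show ?thesis .
qed

lemma prob_correct_cascade_eq_hits_top_first:
  fixes M :: "int pmf" and D :: "(bool \<times> bool) pmf"
  assumes "set_pmf M \<subseteq> {-1, 1}"
  defines "N \<equiv> stream_space (measure_pmf D)"
  shows "\<P>(x in measure_pmf M \<Otimes>\<^sub>M N. correct_cascade k x) =
    \<P>(\<omega> in N. hits_top_first (int k) 0 \<omega>)"
proof -
  interpret N: prob_space N
    unfolding N_def by (rule prob_space.prob_space_stream_space) (rule prob_space_measure_pmf)
  let ?A = "{x \<in> space (measure_pmf M \<Otimes>\<^sub>M N). correct_cascade k x}"
  have "?A \<in> sets (measure_pmf M \<Otimes>\<^sub>M N)"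
    unfolding N_def by measurable
  then have "emeasure (measure_pmf M \<Otimes>\<^sub>M N) ?A = (\<integral>\<^sup>+\<theta>. emeasure N (Pair \<theta> -` ?A) \<partial>measure_pmf M)"
    by (rule N.emeasure_pair_measure_alt)
  also have "\<dots> = (\<integral>\<^sup>+\<theta>. emeasure N {\<omega> \<in> space N. hits_top_first (int k) 0 \<omega>} \<partial>measure_pmf M)"
  proof (intro nn_integral_cong_AE AE_pmfI)
    fix \<theta> assume "\<theta> \<in> set_pmf M"
    then have "Pair \<theta> -` ?A = {\<omega> \<in> space N. hits_top_first (int k) 0 \<omega>}"
      using assms correct_cascade_iff_hits_top_first[of \<theta> k]
      by (auto simp: space_pair_measure N_def space_stream_space)
    then show "emeasure N (Pair \<theta> -` ?A) = emeasure N {\<omega> \<in> space N. hits_top_first (int k) 0 \<omega>}"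
      by simp
  qed
  also have "\<dots> = emeasure N {\<omega> \<in> space N. hits_top_first (int k) 0 \<omega>}"
    by (simp add: measure_pmf.emeasure_space_1)
  finally show ?thesis
    by (simp add: measure_def)
qed

lemma prob_hits_top_first_recurrence:
  fixes p b :: real and K j :: int
  assumes p: "0 \<le> p" "p \<le> 1" and b: "0 \<le> b" "b \<le> 1" and j: "\<bar>j\<bar> < K"
  defines "N \<equiv> stream_space (measure_pmf (pair_pmf (bernoulli_pmf p) (bernoulli_pmf b)))"
    and "q \<equiv> b * (1 - p) + p * (1 - b)"
  shows "\<P>(\<omega> in N. hits_top_first K j \<omega>) =
    q * \<P>(\<omega> in N. hits_top_first K (j + 1) \<omega>) + (1 - q) * \<P>(\<omega> in N. hits_top_first K (j - 1) \<omega>)"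
proof -
  define h where "h i = \<P>(\<omega> in N. hits_top_first K i \<omega>)" for i
  have h_nonneg: "0 \<le> h i" for i
    by (simp add: h_def)
  have "ennreal (h j) =
      (\<integral>\<^sup>+t. ennreal (h (j + walk_step t)) \<partial>measure_pmf (pair_pmf (bernoulli_pmf p) (bernoulli_pmf b)))"
    unfolding h_def N_def
    by (subst prob_space.prob_stream_space[OF prob_space_measure_pmf])
      (simp_all add: hits_top_first_Stream[OF j])
  also have "\<dots> = ennreal (q * h (j + 1) + (1 - q) * h (j - 1))"
  proof -
    have "q * h (j + 1) + (1 - q) * h (j - 1) =
        (h (j - 1) * b + h (j + 1) * (1 - b)) * p + (h (j + 1) * b + h (j - 1) * (1 - b)) * (1 - p)"
      by (simp add: q_def algebra_simps)
    then show ?thesis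
      using p b h_nonneg
      by (simp add: nn_integral_pair_pmf' walk_step_def ennreal_plus ennreal_mult)
  qed
  finally have ennreal_eq: "ennreal (h j) = ennreal (q * h (j + 1) + (1 - q) * h (j - 1))" .
  moreover have "0 \<le> q"
    unfolding q_def using p b by (intro add_nonneg_nonneg mult_nonneg_nonneg) simp_all
  moreover have "0 \<le> 1 - q"
  proof -
    have "1 - q = b * p + (1 - b) * (1 - p)"
      by (simp add: q_def algebra_simps)
    then show ?thesis
      using p b by simp
  qed
  ultimately have "0 \<le> q * h (j + 1) + (1 - q) * h (j - 1)"
    using h_nonneg by simp
  with ennreal_eq h_nonneg show ?thesis
    unfolding h_def by (simp only: ennreal_inj)
qed

lemma gamblers_ruin:
  fixes f :: "int \<Rightarrow> real" and q r :: real and k :: nat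
  assumes q: "q \<noteq> 0" "q * r = 1 - q"
    and bottom: "f (- int k) = 0" and top: "f (int k) = 1"
    and rec: "\<And>j. \<bar>j\<bar> < int k \<Longrightarrow> f j = q * f (j + 1) + (1 - q) * f (j - 1)"
    and j: "\<bar>j\<bar> \<le> int k"
  shows "f j = (\<Sum>i<nat (j + int k). r ^ i) / (\<Sum>i<2 * k. r ^ i)"
proof -
  define a where "a i = f (int i - int k)" for i
  have increment: "a (Suc (Suc i)) - a (Suc i) = r * (a (Suc i) - a i)" if "Suc (Suc i) \<le> 2 * k" for i
  proof -
    have "\<bar>int (Suc i) - int k\<bar> < int k"
      using that by auto
    from rec[OF this] have "q * (a (Suc (Suc i)) - a (Suc i)) = (1 - q) * (a (Suc i) - a i)"
      by (simp add: a_def algebra_simps)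
    then have "q * (a (Suc (Suc i)) - a (Suc i)) = q * (r * (a (Suc i) - a i))"
      by (simp add: q(2)[symmetric] mult.assoc)
    then show ?thesis
      using q(1) by simp
  qed
  have geometric: "a (Suc i) - a i = r ^ i * a 1" if "i < 2 * k" for i
    using that
  proof (induction i)
    case 0
    then show ?case
      using bottom by (simp add: a_def)
  next
    case (Suc i)
    then show ?case
      using increment[of i] by simp
  qed
  have partial_sum: "a i = a 1 * (\<Sum>l<i. r ^ l)" if "i \<le> 2 * k" for i
  proof -
    have "a i = a i - a 0"
      using bottom by (simp add: a_def)
    also have "\<dots> = (\<Sum>l<i. a (Suc l) - a l)"
      by (rule sum_lessThan_telescope[symmetric])
    also have "\<dots> = a 1 * (\<Sum>l<i. r ^ l)"
      using that by (simp add: geometric sum_distrib_left mult.commute)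
    finally show ?thesis .
  qed
  have total: "a 1 * (\<Sum>l<2 * k. r ^ l) = 1"
    using partial_sum[of "2 * k"] top by (simp add: a_def)
  then have "(\<Sum>l<2 * k. r ^ l) \<noteq> 0"
    by auto
  with total have "a 1 = 1 / (\<Sum>l<2 * k. r ^ l)"
    by (simp add: field_simps)
  moreover have "f j = a 1 * (\<Sum>l<nat (j + int k). r ^ l)"
  proof -
    have "j = int (nat (j + int k)) - int k" "nat (j + int k) \<le> 2 * k"
      using j by auto
    then show ?thesis
      using partial_sum unfolding a_def by metis
  qed
  ultimately show ?thesis
    by simp
qed

lemma prob_hits_top_first:
  fixes p b :: real and k :: nat and j :: int
  assumes p: "0 \<le> p" "p \<le> 1" and b: "0 \<le> b" "b \<le> 1" and j: "\<bar>j\<bar> \<le> int k"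
  defines "N \<equiv> stream_space (measure_pmf (pair_pmf (bernoulli_pmf p) (bernoulli_pmf b)))"
    and "q \<equiv> b * (1 - p) + p * (1 - b)"
  assumes q: "q \<noteq> 0" and k: "0 < k"
  shows "\<P>(\<omega> in N. hits_top_first (int k) j \<omega>) =
    (\<Sum>i<nat (j + int k). ((1 - q) / q) ^ i) / (\<Sum>i<2 * k. ((1 - q) / q) ^ i)"
proof (rule gamblers_ruin[where q = q])
  show "q * ((1 - q) / q) = 1 - q"
    using q by simp
  show "\<P>(\<omega> in N. hits_top_first (int k) (- int k) \<omega>) = 0"
    using k by (simp add: not_hits_top_first_bottom)
  show "\<P>(\<omega> in N. hits_top_first (int k) (int k) \<omega>) = 1"
    unfolding N_def
    by (simp add: hits_top_first_top
        prob_space.prob_space[OF prob_space.prob_space_stream_space[OF prob_space_measure_pmf]])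
qed (use p b j q prob_hits_top_first_recurrence in \<open>auto simp: N_def q_def\<close>)

lemma u_priv_bounds:
  assumes "0 < \<epsilon>"
  shows "0 < u_priv \<epsilon>" "u_priv \<epsilon> < 1/2"
proof -
  have "2 < 1 + exp \<epsilon>"
    using assms by simp
  then show "0 < u_priv \<epsilon>" "u_priv \<epsilon> < 1/2"
    by (simp_all add: u_priv_def add_pos_pos divide_less_eq)
qed

lemma u_tilde_bounds:
  assumes "1/2 < p" "p < 1" "0 < \<epsilon>"
  shows "1/2 < u_tilde p \<epsilon>" "u_tilde p \<epsilon> < 1"
proof -
  have "0 < (2 * p - 1) * (1/2 - u_priv \<epsilon>)" "0 < (1 - p) + (2 * p - 1) * u_priv \<epsilon>"
    using assms u_priv_bounds[OF assms(3)] by (simp_all add: add_pos_pos)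
  moreover have "u_tilde p \<epsilon> - 1/2 = (2 * p - 1) * (1/2 - u_priv \<epsilon>)"
    "1 - u_tilde p \<epsilon> = (1 - p) + (2 * p - 1) * u_priv \<epsilon>"
    by (simp_all add: u_tilde_def algebra_simps)
  ultimately show "1/2 < u_tilde p \<epsilon>" "u_tilde p \<epsilon> < 1"
    by linarith+
qed

lemma rho_bounds:
  assumes "1/2 < p" "p < 1" "0 < \<epsilon>"
  shows "0 < rho p \<epsilon>" "rho p \<epsilon> < 1"
  using u_tilde_bounds[OF assms] by (simp_all add: rho_def field_simps)

lemma threshold_pos:
  assumes "1/2 < p" "p < 1" "0 < \<epsilon>"
  shows "0 < threshold p \<epsilon>"
proof -
  have "0 < (1 - p) / p" "(1 - p) / p < 1"
    using assms by (simp_all add: field_simps)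
  then have "0 < log (rho p \<epsilon>) ((1 - p) / p)"
    using rho_bounds[OF assms] by (simp add: log_def divide_neg_neg)
  then show ?thesis
    by (simp add: threshold_def)
qed

theorem lemma2:
  fixes p \<epsilon> :: real
  assumes "1/2 < p" and "p < 1" and "0 < \<epsilon>"
  shows "(u_tilde p \<epsilon> \<noteq> 1/2 \<longrightarrow>
           measure (model p \<epsilon>)
             {x \<in> space (model p \<epsilon>). correct_cascade (threshold p \<epsilon>) x}
           = (rho p \<epsilon> ^ threshold p \<epsilon> - 1) / (rho p \<epsilon> ^ (2 * threshold p \<epsilon>) - 1))
       \<and> (u_tilde p \<epsilon> = 1/2 \<longrightarrow>
           measure (model p \<epsilon>)
             {x \<in> space (model p \<epsilon>). cascade_occurs (threshold p \<epsilon>) x} = 0)"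
proof -
  define k where "k = threshold p \<epsilon>"
  define r where "r = rho p \<epsilon>"
  have q: "1/2 < u_tilde p \<epsilon>"
    using u_tilde_bounds[OF assms] by simp
  have "\<P>(x in model p \<epsilon>. correct_cascade k x) =
      \<P>(\<omega> in stream_space (measure_pmf (pair_pmf (bernoulli_pmf p) (bernoulli_pmf (u_priv \<epsilon>)))).
        hits_top_first (int k) 0 \<omega>)"
    unfolding model_def by (rule prob_correct_cascade_eq_hits_top_first) simp
  also have "\<dots> = (\<Sum>i<k. r ^ i) / (\<Sum>i<2 * k. r ^ i)"
    using prob_hits_top_first[of p "u_priv \<epsilon>" 0 k] assms q u_priv_bounds[OF assms(3)]
      threshold_pos[OF assms]
    by (simp add: k_def r_def rho_def u_tilde_def)
  also have "\<dots> = (r ^ k - 1) / (r ^ (2 * k) - 1)"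
    using rho_bounds[OF assms] by (simp add: r_def power_diff_1_eq)
  finally show ?thesis
    using q by (simp add: k_def r_def)
qed

end
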